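(* Let $x_1,\dots,x_n,y_1,\dots,y_m$ be independent indeterminates over $\mathbb Z$, and let $\sigma_\ell(\mathbf x)$, $\sigma_j(\mathbf y)$ denote the elementary symmetric polynomials in the $x_i$, respectively the $y_j$. Then there exist $nm\times nm$ matrices $A$ and $B$, where every entry of $A$ is an integer polynomial in $\sigma_1(\mathbf x),\dots,\sigma_n(\mathbf x)$ and every entry of $B$ is an integer polynomial in $\sigma_1(\mathbf y),\dots,\sigma_m(\mathbf y)$, such that $$\prod_{i=1}^n\prod_{j=1}^m (t-x_iy_j)=\det(tI-AB).$$
   Context: The elementary symmetric polynomials $\sigma_\ell(x_1,\dots,x_n)$ are defined by $\prod_{k=1}^n(t+x_k)=\sum_{\ell=0}^n\sigma_\ell(x_1,\dots,x_n)t^{n-\ell}$. *)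

theory Defs
  imports "HOL-Computational_Algebra.Polynomial" "Jordan_Normal_Form.Determinant"
begin

text \<open>Elementary symmetric polynomial sigma_l(x_1,...,x_n), exactly as in the context:
  prod_{k=1}^n (t + x_k) = sum_{l=0}^n sigma_l t^(n-l).  Meaningful for l \<le> n.\<close>
definition esym :: "nat \<Rightarrow> (nat \<Rightarrow> 'a::comm_ring_1) \<Rightarrow> nat \<Rightarrow> 'a" where
  "esym n x l = coeff (\<Prod>k=1..n. [:x k, 1:]) (n - l)"

datatype ipoly = Const int | Var nat | Add ipoly ipoly | Mul ipoly ipoly

fun ieval :: "(nat \<Rightarrow> 'a::comm_ring_1) \<Rightarrow> ipoly \<Rightarrow> 'a" where
  "ieval env (Const c) = of_int c"
| "ieval env (Var k) = env k"
| "ieval env (Add p q) = ieval env p + ieval env q"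
| "ieval env (Mul p q) = ieval env p * ieval env q"

fun ivars :: "ipoly \<Rightarrow> nat set" where
  "ivars (Const c) = {}"
| "ivars (Var k) = {k}"
| "ivars (Add p q) = ivars p \<union> ivars q"
| "ivars (Mul p q) = ivars p \<union> ivars q"

end

theory Submission
  imports Defs
begin

(* Let e_k = (t + x_1) ... (t + x_k) and let C_x be the companion matrix of e_n, whose last
   column consists of the -sigma_l(x). In the basis e_0, ..., e_(n-1) of the polynomials of degree
   < n, multiplication by t modulo e_n is lower bidiagonal with diagonal -x_1, ..., -x_n, and the
   change of basis P_x is unitriangular. Hence C_x \<otimes> C_y is conjugate, via P_x \<otimes> P_y of
   determinant 1, to a lower triangular matrix with diagonal entries x_i y_j, which gives
   det (t I - C_x \<otimes> C_y) = prod (t - x_i y_j). Finally C_x \<otimes> C_y = (C_x \<otimes> I) (I \<otimes> C_y). *)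

definition linear_prod_poly :: "(nat \<Rightarrow> 'a::comm_ring_1) \<Rightarrow> nat \<Rightarrow> 'a poly" where
  "linear_prod_poly x k = (\<Prod>i=1..k. [:x i, 1:])"

lemma linear_prod_poly_0 [simp]: "linear_prod_poly x 0 = 1"
  by (simp add: linear_prod_poly_def)

lemma linear_prod_poly_Suc:
  "linear_prod_poly x (Suc k)
     = pCons 0 (linear_prod_poly x k) + smult (x (Suc k)) (linear_prod_poly x k)"
  by (simp add: linear_prod_poly_def prod.cl_ivl_Suc mult_pCons_right algebra_simps)

lemma coeff_linear_prod_poly_above: "k < a \<Longrightarrow> coeff (linear_prod_poly x k) a = 0"
proof (induction k arbitrary: a)
  case (Suc k)
  then show ?case by (cases a) (simp_all add: linear_prod_poly_Suc)
qed (simp add: coeff_1)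

lemma coeff_linear_prod_poly_self [simp]: "coeff (linear_prod_poly x k) k = 1"
  by (induction k) (simp_all add: linear_prod_poly_Suc coeff_linear_prod_poly_above)

definition companion_mat :: "nat \<Rightarrow> 'a::comm_ring_1 poly \<Rightarrow> 'a mat" where
  "companion_mat n p =
     mat n n (\<lambda>(a, b). if b = n - 1 then - coeff p a else if a = b + 1 then 1 else 0)"

lemma dim_companion_mat [simp]:
  "dim_row (companion_mat n p) = n" "dim_col (companion_mat n p) = n"
  by (simp_all add: companion_mat_def)

lemma companion_mat_mult_coeffs:
  "companion_mat n p *\<^sub>v vec n (coeff q) = vec n (coeff (pCons 0 q - smult (coeff q (n - 1)) p))"
proof (rule eq_vecI)
  fix a assume "a < dim_vec (vec n (coeff (pCons 0 q - smult (coeff q (n - 1)) p)))"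
  then have a: "a < n" by simp
  have split: "{0..<n} = insert (n - 1) {0..<n - 1}" using a by auto
  have "(\<Sum>c\<in>{0..<n - 1}. (if a = c + 1 then 1 else 0) * coeff q c)
      = (if a = 0 then 0 else coeff q (a - 1))"
  proof (cases a)
    case (Suc a')
    then have "(\<Sum>c\<in>{0..<n - 1}. (if a = c + 1 then 1 else 0) * coeff q c)
        = (\<Sum>c\<in>{0..<n - 1}. if c = a' then coeff q a' else 0)"
      by (intro sum.cong) auto
    then show ?thesis using a Suc by simp
  qed simp
  then show "(companion_mat n p *\<^sub>v vec n (coeff q)) $ a
      = vec n (coeff (pCons 0 q - smult (coeff q (n - 1)) p)) $ a"
    using a by (simp add: companion_mat_def scalar_prod_def split coeff_pCons split: nat.split)
qed simp

definition lower_bidiag_mat :: "nat \<Rightarrow> (nat \<Rightarrow> 'a::{zero,one}) \<Rightarrow> 'a mat" where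
  "lower_bidiag_mat n d = mat n n (\<lambda>(a, b). if a = b then d b else if a = b + 1 then 1 else 0)"

lemma dim_lower_bidiag_mat [simp]:
  "dim_row (lower_bidiag_mat n d) = n" "dim_col (lower_bidiag_mat n d) = n"
  by (simp_all add: lower_bidiag_mat_def)

lemma mult_lower_bidiag_mat_index:
  fixes A :: "'a::semiring_1 mat"
  assumes "dim_col A = n" "a < dim_row A" "b < n"
  shows "(A * lower_bidiag_mat n d) $$ (a, b)
    = A $$ (a, b) * d b + (if b + 1 < n then A $$ (a, b + 1) else 0)"
proof -
  have "(A * lower_bidiag_mat n d) $$ (a, b)
      = (\<Sum>c\<in>{0..<n}. (if c = b then A $$ (a, c) * d b else 0)
                         + (if c = b + 1 then A $$ (a, c) else 0))"
    using assms by (auto simp: lower_bidiag_mat_def scalar_prod_def intro!: sum.cong)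
  then show ?thesis
    using assms by (simp add: sum.distrib)
qed

definition partial_prods_mat :: "nat \<Rightarrow> (nat \<Rightarrow> 'a::comm_ring_1) \<Rightarrow> 'a mat" where
  "partial_prods_mat n x = mat n n (\<lambda>(a, b). coeff (linear_prod_poly x b) a)"

lemma dim_partial_prods_mat [simp]:
  "dim_row (partial_prods_mat n x) = n" "dim_col (partial_prods_mat n x) = n"
  by (simp_all add: partial_prods_mat_def)

lemma companion_mat_mult_partial_prods_mat:
  "companion_mat n (linear_prod_poly x n) * partial_prods_mat n x
     = partial_prods_mat n x * lower_bidiag_mat n (\<lambda>b. - x (Suc b))"
proof (rule eq_matI)
  fix a b assume "a < dim_row (partial_prods_mat n x * lower_bidiag_mat n (\<lambda>b. - x (Suc b)))"
    and "b < dim_col (partial_prods_mat n x * lower_bidiag_mat n (\<lambda>b. - x (Suc b)))"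
  then have a: "a < n" and b: "b < n" by simp_all
  let ?e = "linear_prod_poly x"
  have "(companion_mat n (?e n) * partial_prods_mat n x) $$ (a, b)
      = (companion_mat n (?e n) *\<^sub>v col (partial_prods_mat n x) b) $ a"
    using a b by simp
  also have "\<dots> = coeff (pCons 0 (?e b) - smult (coeff (?e b) (n - 1)) (?e n)) a"
    using a b by (simp add: partial_prods_mat_def companion_mat_mult_coeffs)
  also have "\<dots> = (partial_prods_mat n x * lower_bidiag_mat n (\<lambda>b. - x (Suc b))) $$ (a, b)"
  proof (cases "b + 1 < n")
    case True
    then show ?thesis
      using a b by (subst mult_lower_bidiag_mat_index)
        (simp_all add: partial_prods_mat_def coeff_linear_prod_poly_above linear_prod_poly_Suc)
  next
    case False
    then have "n = Suc b" using b by simp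
    then show ?thesis
      using a by (subst mult_lower_bidiag_mat_index)
        (simp_all add: partial_prods_mat_def linear_prod_poly_Suc)
  qed
  finally show "(companion_mat n (?e n) * partial_prods_mat n x) $$ (a, b)
      = (partial_prods_mat n x * lower_bidiag_mat n (\<lambda>b. - x (Suc b))) $$ (a, b)" .
qed simp_all

lemma less_mult_imp_div_mod_less:
  fixes u n m :: nat
  assumes "u < n * m"
  shows "u div m < n" "u mod m < m"
  using assms by (auto simp: less_mult_imp_div_less intro!: mod_less_divisor gr0I)

lemma bij_betw_div_mod: "bij_betw (\<lambda>u::nat. (u div m, u mod m)) {..<n * m} ({..<n} \<times> {..<m})"
proof (rule bij_betw_byWitness[where f' = "\<lambda>(a, b). a * m + b"])
  have "a * m + b < n * m" if "a < n" "b < m" for a b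
  proof -
    have "a * m + b < Suc a * m" using that by simp
    also have "\<dots> \<le> n * m" using that by (intro mult_right_mono) auto
    finally show ?thesis .
  qed
  then show "(\<lambda>(a, b). a * m + b) ` ({..<n} \<times> {..<m}) \<subseteq> {..<n * m}"
    by auto
qed (auto simp: less_mult_imp_div_mod_less)

lemma sum_div_mod:
  fixes f :: "nat \<Rightarrow> nat \<Rightarrow> 'a::comm_monoid_add"
  shows "(\<Sum>u<n * m. f (u div m) (u mod m)) = (\<Sum>a<n. \<Sum>b<m. f a b)"
  using sum.reindex_bij_betw[OF bij_betw_div_mod, of "\<lambda>(a, b). f a b"]
  by (simp add: sum.cartesian_product)

lemma prod_div_mod:
  fixes f :: "nat \<Rightarrow> nat \<Rightarrow> 'a::comm_monoid_mult"
  shows "(\<Prod>u<n * m. f (u div m) (u mod m)) = (\<Prod>a<n. \<Prod>b<m. f a b)"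
  using prod.reindex_bij_betw[OF bij_betw_div_mod, of "\<lambda>(a, b). f a b"]
  by (simp add: prod.cartesian_product)

definition kron_mat :: "'a::times mat \<Rightarrow> 'a mat \<Rightarrow> 'a mat" where
  "kron_mat A B = mat (dim_row A * dim_row B) (dim_col A * dim_col B)
     (\<lambda>(r, s). A $$ (r div dim_row B, s div dim_col B) * B $$ (r mod dim_row B, s mod dim_col B))"

lemma dim_kron_mat [simp]:
  "dim_row (kron_mat A B) = dim_row A * dim_row B"
  "dim_col (kron_mat A B) = dim_col A * dim_col B"
  by (simp_all add: kron_mat_def)

lemma index_kron_mat [simp]:
  "r < dim_row A * dim_row B \<Longrightarrow> s < dim_col A * dim_col B \<Longrightarrow>
   kron_mat A B $$ (r, s)
     = A $$ (r div dim_row B, s div dim_col B) * B $$ (r mod dim_row B, s mod dim_col B)"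
  by (simp add: kron_mat_def)

lemma kron_mat_mult:
  fixes A :: "'a::comm_semiring_0 mat"
  assumes "dim_col A = dim_row A'" "dim_col B = dim_row B'"
  shows "kron_mat A B * kron_mat A' B' = kron_mat (A * A') (B * B')"
proof (rule eq_matI)
  fix r s
  assume "r < dim_row (kron_mat (A * A') (B * B'))" "s < dim_col (kron_mat (A * A') (B * B'))"
  then have r: "r < dim_row A * dim_row B" and s: "s < dim_col A' * dim_col B'" by simp_all
  let ?r1 = "r div dim_row B" and ?r2 = "r mod dim_row B"
  let ?s1 = "s div dim_col B'" and ?s2 = "s mod dim_col B'"
  have bounds: "?r1 < dim_row A" "?r2 < dim_row B" "?s1 < dim_col A'" "?s2 < dim_col B'"
    using r s by (simp_all add: less_mult_imp_div_mod_less)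
  have "(kron_mat A B * kron_mat A' B') $$ (r, s)
      = (\<Sum>u<dim_col A * dim_col B. (A $$ (?r1, u div dim_col B) * B $$ (?r2, u mod dim_col B))
          * (A' $$ (u div dim_col B, ?s1) * B' $$ (u mod dim_col B, ?s2)))"
    using r s assms by (auto simp: scalar_prod_def atLeast0LessThan intro!: sum.cong)
  also have "\<dots> = (\<Sum>a<dim_col A. \<Sum>b<dim_col B.
      (A $$ (?r1, a) * B $$ (?r2, b)) * (A' $$ (a, ?s1) * B' $$ (b, ?s2)))"
    by (rule sum_div_mod)
  also have "\<dots> = (\<Sum>a<dim_col A. A $$ (?r1, a) * A' $$ (a, ?s1))
      * (\<Sum>b<dim_col B. B $$ (?r2, b) * B' $$ (b, ?s2))"
    by (simp add: sum_product mult_ac)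
  also have "\<dots> = kron_mat (A * A') (B * B') $$ (r, s)"
    using r s assms bounds by (simp add: scalar_prod_def atLeast0LessThan)
  finally show "(kron_mat A B * kron_mat A' B') $$ (r, s) = kron_mat (A * A') (B * B') $$ (r, s)" .
qed simp_all

lemma less_imp_div_less_or_mod_less:
  fixes i j m :: nat
  assumes "i < j"
  shows "i div m < j div m \<or> i div m = j div m \<and> i mod m < j mod m"
proof (cases "i div m = j div m")
  case True
  then have "i mod m < j mod m"
    using assms by (metis add_less_cancel_left div_mult_mod_eq)
  with True show ?thesis by simp
next
  case False
  then show ?thesis
    using assms div_le_mono[of i j m] by simp
qed

lemma kron_mat_lower_triangular:
  fixes A :: "'a::semiring_0 mat"
  assumes A: "A \<in> carrier_mat n n" "\<And>i j. i < j \<Longrightarrow> j < n \<Longrightarrow> A $$ (i, j) = 0"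
    and B: "B \<in> carrier_mat m m" "\<And>i j. i < j \<Longrightarrow> j < m \<Longrightarrow> B $$ (i, j) = 0"
    and ij: "i < j" "j < n * m"
  shows "kron_mat A B $$ (i, j) = 0"
proof -
  have "j div m < n" "j mod m < m"
    using ij(2) by (rule less_mult_imp_div_mod_less)+
  then show ?thesis
    using less_imp_div_less_or_mod_less[OF ij(1), of m] A B ij by auto
qed

lemma upper_triangular_kron_mat:
  fixes A :: "'a::semiring_0 mat"
  assumes A: "A \<in> carrier_mat n n" "upper_triangular A"
    and B: "B \<in> carrier_mat m m" "upper_triangular B"
  shows "upper_triangular (kron_mat A B)"
proof (rule upper_triangularI)
  fix i j assume ji: "j < i" and "i < dim_row (kron_mat A B)"
  then have "i < n * m" using A B by simp
  then have "i div m < n" "i mod m < m"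
    by (rule less_mult_imp_div_mod_less)+
  then show "kron_mat A B $$ (i, j) = 0"
    using less_imp_div_less_or_mod_less[OF ji, of m] A B ji \<open>i < n * m\<close>
    by (auto simp: upper_triangular_def)
qed

lemma det_sub_lower_triangular:
  fixes M :: "'a::comm_ring_1 mat"
  assumes "M \<in> carrier_mat n n" "\<And>i j. i < j \<Longrightarrow> j < n \<Longrightarrow> M $$ (i, j) = 0"
  shows "det (t \<cdot>\<^sub>m 1\<^sub>m n - M) = (\<Prod>i<n. t - M $$ (i, i))"
proof -
  have "det (t \<cdot>\<^sub>m 1\<^sub>m n - M) = prod_list (diag_mat (t \<cdot>\<^sub>m 1\<^sub>m n - M))"
    using assms by (intro det_lower_triangular[of n]) auto
  then show ?thesis
    using assms by (simp add: prod_list_diag_prod atLeast0LessThan)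
qed

lemma det_sub_eq_if_intertwined:
  fixes M :: "'a::comm_ring_1 mat"
  assumes M: "M \<in> carrier_mat n n" and K: "K \<in> carrier_mat n n" and D: "D \<in> carrier_mat n n"
    and MK: "M * K = K * D" and "det K = 1"
  shows "det (t \<cdot>\<^sub>m 1\<^sub>m n - M) = det (t \<cdot>\<^sub>m 1\<^sub>m n - D)"
proof -
  have I: "t \<cdot>\<^sub>m 1\<^sub>m n \<in> carrier_mat n n" by simp
  have "(t \<cdot>\<^sub>m 1\<^sub>m n - M) * K = t \<cdot>\<^sub>m K - M * K"
    using minus_mult_distrib_mat[OF I M K] mult_smult_assoc_mat[of "1\<^sub>m n" n n K] K by simp
  also have "\<dots> = K * (t \<cdot>\<^sub>m 1\<^sub>m n - D)"
    using mult_minus_distrib_mat[OF K I D] mult_smult_distrib[of K n n "1\<^sub>m n" n] K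
    by (simp add: MK)
  finally have "det (t \<cdot>\<^sub>m 1\<^sub>m n - M) * det K = det K * det (t \<cdot>\<^sub>m 1\<^sub>m n - D)"
    using M K D by (metis det_mult minus_carrier_mat one_carrier_mat smult_carrier_mat)
  then show ?thesis
    using \<open>det K = 1\<close> by simp
qed

lemma det_sub_kron_companion_mat:
  fixes x y :: "nat \<Rightarrow> 'a::comm_ring_1"
  shows "det (t \<cdot>\<^sub>m 1\<^sub>m (n * m) - kron_mat (companion_mat n (linear_prod_poly x n))
                                          (companion_mat m (linear_prod_poly y m)))
    = (\<Prod>a<n. \<Prod>b<m. t - x (Suc a) * y (Suc b))"
proof -
  let ?C =
    "kron_mat (companion_mat n (linear_prod_poly x n)) (companion_mat m (linear_prod_poly y m))"
  let ?P = "kron_mat (partial_prods_mat n x) (partial_prods_mat m y)"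
  let ?T = "kron_mat (lower_bidiag_mat n (\<lambda>b. - x (Suc b))) (lower_bidiag_mat m (\<lambda>b. - y (Suc b)))"
  have carriers: "?C \<in> carrier_mat (n * m) (n * m)" "?P \<in> carrier_mat (n * m) (n * m)"
    "?T \<in> carrier_mat (n * m) (n * m)"
    by auto
  have "?C * ?P = ?P * ?T"
    by (simp add: kron_mat_mult companion_mat_mult_partial_prods_mat)
  moreover have "det ?P = 1"
  proof -
    have "upper_triangular ?P"
      by (intro upper_triangular_kron_mat)
        (auto simp: upper_triangular_def partial_prods_mat_def coeff_linear_prod_poly_above)
    then have "det ?P = prod_list (diag_mat ?P)"
      using carriers by (intro det_upper_triangular[of _ "n * m"])
    also have "\<dots> = 1"
      by (auto simp: prod_list_diag_prod partial_prods_mat_def less_mult_imp_div_mod_less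
          intro!: prod.neutral)
    finally show ?thesis .
  qed
  ultimately have "det (t \<cdot>\<^sub>m 1\<^sub>m (n * m) - ?C) = det (t \<cdot>\<^sub>m 1\<^sub>m (n * m) - ?T)"
    using carriers by (intro det_sub_eq_if_intertwined)
  also have "\<dots> = (\<Prod>u<n * m. t - ?T $$ (u, u))"
    using carriers
    by (intro det_sub_lower_triangular kron_mat_lower_triangular[where n = n and m = m])
      (auto simp: lower_bidiag_mat_def)
  also have "\<dots> = (\<Prod>u<n * m. t - x (Suc (u div m)) * y (Suc (u mod m)))"
    by (auto simp: lower_bidiag_mat_def less_mult_imp_div_mod_less intro!: prod.cong)
  also have "\<dots> = (\<Prod>a<n. \<Prod>b<m. t - x (Suc a) * y (Suc b))"
    by (rule prod_div_mod)
  finally show ?thesis .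
qed

(* Var k stands for sigma_k, so the last column entry -coeff e_n a is -sigma_(n - a). *)
definition companion_ipoly :: "nat \<Rightarrow> nat \<Rightarrow> nat \<Rightarrow> ipoly" where
  "companion_ipoly n a b =
     (if b = n - 1 then Mul (Const (-1)) (Var (n - a)) else if a = b + 1 then Const 1 else Const 0)"

lemma ivars_companion_ipoly: "a < n \<Longrightarrow> ivars (companion_ipoly n a b) \<subseteq> {1..n}"
  by (auto simp: companion_ipoly_def)

lemma ieval_companion_ipoly:
  "a < n \<Longrightarrow> b < n \<Longrightarrow>
   ieval (esym n x) (companion_ipoly n a b) = companion_mat n (linear_prod_poly x n) $$ (a, b)"
  by (simp add: companion_ipoly_def companion_mat_def esym_def linear_prod_poly_def)

theorem mainTheorem5:
  fixes n m :: nat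
  assumes "n \<ge> 1" and "m \<ge> 1"
  shows "\<exists>PA PB :: nat \<Rightarrow> nat \<Rightarrow> ipoly.
     (\<forall>i<n*m. \<forall>j<n*m. ivars (PA i j) \<subseteq> {1..n} \<and> ivars (PB i j) \<subseteq> {1..m}) \<and>
     (\<forall>(x :: nat \<Rightarrow> int) (y :: nat \<Rightarrow> int) (t :: int).
        let A = mat (n*m) (n*m) (\<lambda>(i,j). ieval (esym n x) (PA i j));
            B = mat (n*m) (n*m) (\<lambda>(i,j). ieval (esym m y) (PB i j))
        in (\<Prod>i=1..n. \<Prod>j=1..m. t - x i * y j)
             = det (smult_mat t (one_mat (n*m)) - A * B))"
proof -
  define PA where
    "PA r s = (if r mod m = s mod m then companion_ipoly n (r div m) (s div m) else Const 0)"
    for r s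
  define PB where
    "PB r s = (if r div m = s div m then companion_ipoly m (r mod m) (s mod m) else Const 0)"
    for r s
  have "ivars (PA i j) \<subseteq> {1..n} \<and> ivars (PB i j) \<subseteq> {1..m}" if "i < n * m" for i j
    using less_mult_imp_div_mod_less[OF that]
    by (auto simp: PA_def PB_def dest: ivars_companion_ipoly[THEN subsetD])
  moreover have "(\<Prod>i=1..n. \<Prod>j=1..m. t - x i * y j)
      = det (t \<cdot>\<^sub>m 1\<^sub>m (n * m) - mat (n * m) (n * m) (\<lambda>(i, j). ieval (esym n x) (PA i j))
                                * mat (n * m) (n * m) (\<lambda>(i, j). ieval (esym m y) (PB i j)))"
    for x y :: "nat \<Rightarrow> int" and t :: int
  proof -
    have "mat (n * m) (n * m) (\<lambda>(i, j). ieval (esym n x) (PA i j))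
        = kron_mat (companion_mat n (linear_prod_poly x n)) (1\<^sub>m m)"
      by (rule eq_matI) (auto simp: PA_def ieval_companion_ipoly less_mult_imp_div_mod_less)
    moreover have "mat (n * m) (n * m) (\<lambda>(i, j). ieval (esym m y) (PB i j))
        = kron_mat (1\<^sub>m n) (companion_mat m (linear_prod_poly y m))"
      by (rule eq_matI) (auto simp: PB_def ieval_companion_ipoly less_mult_imp_div_mod_less)
    ultimately show ?thesis
      by (simp add: kron_mat_mult prod.atLeast1_atMost_eq det_sub_kron_companion_mat)
  qed
  ultimately show ?thesis
    unfolding Let_def by blast
qed

end
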